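(* Assume hypotheses (A) and (B) and that $\min_{1\le i\le d}\frac{1}{G_{ii}}(\sqrt{\mu_i}-\sqrt{\nu_i})^2=\frac{1}{G_{11}}(\sqrt{\mu_1}-\sqrt{\nu_1})^2$. Let $\alpha\in\mathcal{B}_{\{1\}}$ with $\{2,\dots,d\}\setminus J(\alpha)\ne\emptyset$. Then for every $i\in\{2,\dots,d\}\setminus J(\alpha)$ there exists $\tilde\alpha\in\mathcal{B}_{\{1\}}$ such that $J(\alpha)\cup\{i\}\subset J(\tilde\alpha)$ and $$R(\tilde\alpha)<\max\Bigl\{R(\alpha),\ -\frac{1}{G_{ii}}\bigl(\sqrt{\mu_i}-\sqrt{\nu_i}\bigr)^2\Bigr\}.$$
   Context: Jackson network with $d$ queues: arrival rates $\lambda_i\ge0$, service rates $\mu_i>0$, routing matrix $P=(p_{ij})_{i,j=1}^d$ nonnegative with $p_{ii}=0$, $\sum_jp_{ij}\le1$, $p_{i0}=1-\sum_jp_{ij}$. Hypothesis (A): the jump-rate kernel on $\mathbb{Z}^d$ (jumps $+\epsilon^i$ at rate $\lambda_i$, $-\epsilon^i$ at rate $\mu_ip_{i0}$, $\epsilon^j-\epsilon^i$ at rate $\mu_ip_{ij}$) is irreducible (equivalently spectral radius of $P$ $<1$ and for every $i$ some $\lambda_jp^{(n)}_{ji}>0$); then the traffic equations $\nu_j=\lambda_j+\sum_i\nu_ip_{ij}$ have a unique solution with $\nu_i>0$. Hypothesis (B): $\nu_i<\mu_i$ for all $i$. $G=(I-P)^{-1}$. For $\alpha\in\mathbb{R}^d$,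 $$R(\alpha)=\sum_{i=1}^d\mu_i\Bigl(\sum_{j=1}^dp_{ij}e^{\alpha^j-\alpha^i}+p_{i0}e^{-\alpha^i}-1\Bigr)+\sum_{i=1}^d\lambda_i(e^{\alpha^i}-1).$$ $\mathcal{B}_{\{1\}}$ is the set of $\alpha\in\mathbb{R}^d$ with $e^{\alpha^k}\le\sum_{j=1}^dp_{kj}e^{\alpha^j}+p_{k0}$ for all $k\ne1$. $J(\alpha)$ is the set of $k\in\{1,\dots,d\}$ with $e^{\alpha^k}=\sum_{j=1}^dp_{kj}e^{\alpha^j}+p_{k0}$. *)

theory Defs
  imports "HOL-Analysis.Analysis"
begin

text \<open>Queues are indexed by a finite type 'n (d = CARD('n)); the distinguished
queue "1" is an arbitrary fixed element k1 :: 'n. P is the routing matrix,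
lam the arrival rates, mu the service rates.\<close>

definition p0 :: "real^'n^'n \<Rightarrow> 'n::finite \<Rightarrow> real" where
  "p0 P i = 1 - (\<Sum>j\<in>UNIV. P$i$j)"

definition unitv :: "'n::finite \<Rightarrow> int^'n" where
  "unitv i = (\<chi> k. if k = i then 1 else 0)"

definition jackson_steps :: "real^'n \<Rightarrow> real^'n \<Rightarrow> real^'n^'n \<Rightarrow> (int^'n::finite) set" where
  "jackson_steps lam mu P =
     {unitv i | i. lam$i > 0}
   \<union> {- unitv i | i. mu$i * p0 P i > 0}
   \<union> {unitv j - unitv i | i j. i \<noteq> j \<and> mu$i * P$i$j > 0}"

definition hypA :: "real^'n \<Rightarrow> real^'n \<Rightarrow> real^'n^'n \<Rightarrow> bool" where
  "hypA lam mu P \<longleftrightarrow>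
     (\<forall>x y :: int^'n::finite. (\<lambda>a b. b - a \<in> jackson_steps lam mu P)\<^sup>*\<^sup>* x y)"

definition Rfun :: "real^'n \<Rightarrow> real^'n \<Rightarrow> real^'n^'n \<Rightarrow> real^'n::finite \<Rightarrow> real" where
  "Rfun lam mu P \<alpha> =
     (\<Sum>i\<in>UNIV. mu$i * ((\<Sum>j\<in>UNIV. P$i$j * exp (\<alpha>$j - \<alpha>$i)) + p0 P i * exp (- \<alpha>$i) - 1))
   + (\<Sum>i\<in>UNIV. lam$i * (exp (\<alpha>$i) - 1))"

definition Bset :: "real^'n^'n \<Rightarrow> 'n::finite \<Rightarrow> (real^'n) set" where
  "Bset P k1 = {\<alpha>. \<forall>k. k \<noteq> k1 \<longrightarrow> exp (\<alpha>$k) \<le> (\<Sum>j\<in>UNIV. P$k$j * exp (\<alpha>$j)) + p0 P k}"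

definition Jset :: "real^'n^'n \<Rightarrow> real^'n::finite \<Rightarrow> 'n set" where
  "Jset P \<alpha> = {k. exp (\<alpha>$k) = (\<Sum>j\<in>UNIV. P$k$j * exp (\<alpha>$j)) + p0 P k}"

end

theory Submission
  imports Defs
begin

text \<open>
  For nonnegative rates \<open>m\<close>, \<open>R_m\<close> is convex in \<open>\<alpha>\<close>, so a stationary point \<open>\<beta>\<close> of
  \<open>R_m\<close> minimises it. Moreover \<open>R_mu - R_m = \<Sum>k (mu_k - m_k) slack_k / exp \<alpha>_k\<close>, where
  \<open>slack_k \<ge> 0\<close> (for \<open>k \<noteq> k1\<close>) are the constraints defining \<open>B_{k1}\<close>. So if
  \<open>m \<le> mu\<close> with equality at \<open>k1\<close> and strict inequality at \<open>i\<close>, and if \<open>\<beta>\<close> has tight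
  constraints wherever \<open>m \<noteq> mu\<close>, then \<open>R_mu \<beta> = R_m \<beta> \<le> R_m \<alpha> < R_mu \<alpha>\<close>.

  If the \<open>k1\<close>-constraint is tight at \<open>\<alpha>\<close>, take \<open>m = nu\<close> and \<open>\<beta> = 0\<close>, which is stationary
  by the traffic equations. Otherwise take \<open>exp \<beta>_k = 1 + c G_{k,k1}\<close>, which makes every
  constraint \<open>k \<noteq> k1\<close> tight, and \<open>m_k = (nu_k + c nu_{k1} G_{k1,k}) exp \<beta>_k\<close>, which
  makes \<open>\<beta>\<close> stationary; \<open>c\<close> is tuned so that \<open>m_{k1} = mu_{k1}\<close>. Then \<open>m_k < mu_k\<close> for
  \<open>k \<noteq> k1\<close> follows from the minimality of the \<open>k1\<close>-ratio together with
  \<open>G_{j,b} G_{b,c} \<le> G_{j,c} G_{b,b}\<close> and \<open>nu_b G_{b,c} \<le> nu_c G_{b,b}\<close>, which are consequences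
  of a minimum principle for \<open>P\<close>-superharmonic vectors, itself a consequence of
  irreducibility. The bound obtained is even \<open>R(\<beta>) < R(\<alpha>)\<close>.
\<close>

section \<open>Irreducibility, the minimum principle and the Green matrix\<close>

lemma sum_unitv: "(\<Sum>j\<in>S. unitv i $ j) = (if i \<in> S then 1 else 0)"
  by (simp add: unitv_def)

lemma rtranclp_steps_additive_mono:
  fixes f :: "'a::ab_group_add \<Rightarrow> 'b::ordered_ab_group_add"
  assumes additive: "\<And>a b. f (a + b) = f a + f b"
    and steps: "\<And>s. s \<in> X \<Longrightarrow> f s \<ge> 0"
    and path: "(\<lambda>a b. b - a \<in> X)\<^sup>*\<^sup>* x y"
  shows "f x \<le> f y"
  using path
proof (induction rule: rtranclp_induct)
  case (step y z)
  have "f z = f y + f (z - y)"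
    using additive[of y "z - y"] by simp
  then show ?case
    using step steps[of "z - y"] by (simp add: add_increasing2)
qed simp

lemma I_minus_mult_vec_nth:
  fixes P :: "real^'n::finite^'n"
  shows "((mat 1 - P) *v x)$j = x$j - (\<Sum>l\<in>UNIV. P$j$l * x$l)"
  by (simp add: matrix_vector_mult_def mat_def left_diff_distrib sum_subtractf of_bool_def[symmetric])

lemma I_minus_mult_nth:
  fixes P G :: "real^'n::finite^'n"
  shows "((mat 1 - P) ** G)$j$c = G$j$c - (\<Sum>l\<in>UNIV. P$j$l * G$l$c)"
  by (simp add: matrix_matrix_mult_def mat_def left_diff_distrib sum_subtractf of_bool_def[symmetric])

lemma mult_I_minus_nth:
  fixes P G :: "real^'n::finite^'n"
  shows "(G ** (mat 1 - P))$j$c = G$j$c - (\<Sum>l\<in>UNIV. G$j$l * P$l$c)"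
  by (simp add: matrix_matrix_mult_def mat_def right_diff_distrib sum_subtractf of_bool_def[symmetric])

locale jackson_routing =
  fixes lam mu :: "real^'n::finite" and P :: "real^'n^'n"
  assumes mu_pos: "\<And>i. mu$i > 0"
    and P_nonneg: "\<And>i j. P$i$j \<ge> 0"
    and P_rows: "\<And>i. (\<Sum>j\<in>UNIV. P$i$j) \<le> 1"
    and irreducible: "hypA lam mu P"
begin

lemma P_pos_of_rate_pos: "mu$i * P$i$j > 0 \<Longrightarrow> P$i$j > 0"
  using mu_pos[of i] by (simp add: zero_less_mult_iff)

text \<open>Along every jump the number of customers in \<open>S\<close> cannot decrease,
  yet irreducibility lets the walk go from \<open>0\<close> to \<open>-unitv i0\<close>.\<close>
lemma closed_set_has_exit:
  assumes "i0 \<in> S"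
    and closed: "\<And>j l. j \<in> S \<Longrightarrow> P$j$l > 0 \<Longrightarrow> l \<in> S"
    and no_exit: "\<And>j. j \<in> S \<Longrightarrow> p0 P j = 0"
  shows False
proof -
  let ?f = "\<lambda>x :: int^'n. \<Sum>j\<in>S. x$j"
  have nonneg: "?f s \<ge> 0" if step: "s \<in> jackson_steps lam mu P" for s
  proof -
    consider i where "s = unitv i" | i where "s = - unitv i" "mu$i * p0 P i > 0"
      | i j where "s = unitv j - unitv i" "mu$i * P$i$j > 0"
      using step unfolding jackson_steps_def by blast
    then show ?thesis
    proof cases
      case (2 i)
      then show ?thesis using no_exit[of i] by (auto simp: sum_negf sum_unitv)
    next
      case (3 i j)
      then show ?thesis using closed[of i j] P_pos_of_rate_pos[of i j]
        by (auto simp: sum_subtractf sum_unitv)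
    qed (simp add: sum_unitv)
  qed
  have path: "(\<lambda>a b. b - a \<in> jackson_steps lam mu P)\<^sup>*\<^sup>* 0 (- unitv i0)"
    using irreducible unfolding hypA_def by blast
  have additive: "?f (a + b) = ?f a + ?f b" for a b
    by (simp add: plus_vec_def vec_lambda_inverse sum.distrib)
  have "?f 0 \<le> ?f (- unitv i0)"
    by (rule rtranclp_steps_additive_mono[of ?f, OF additive nonneg path])
  then show False
    using \<open>i0 \<in> S\<close> by (simp add: sum_negf sum_unitv)
qed

lemma set_has_entrance:
  assumes "i0 \<in> S"
    and no_arrivals: "\<And>j. j \<in> S \<Longrightarrow> lam$j = 0"
    and no_inflow: "\<And>j l. j \<notin> S \<Longrightarrow> l \<in> S \<Longrightarrow> P$j$l = 0"
  shows False
proof -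
  let ?f = "\<lambda>x :: int^'n. - (\<Sum>j\<in>S. x$j)"
  have nonneg: "?f s \<ge> 0" if step: "s \<in> jackson_steps lam mu P" for s
  proof -
    consider i where "s = unitv i" "lam$i > 0" | i where "s = - unitv i"
      | i j where "s = unitv j - unitv i" "mu$i * P$i$j > 0"
      using step unfolding jackson_steps_def by blast
    then show ?thesis
    proof cases
      case (1 i)
      then show ?thesis using no_arrivals[of i] by (auto simp: sum_unitv)
    next
      case (3 i j)
      then show ?thesis using no_inflow[of i j] P_pos_of_rate_pos[of i j]
        by (auto simp: sum_subtractf sum_unitv)
    qed (simp add: sum_negf sum_unitv)
  qed
  have path: "(\<lambda>a b. b - a \<in> jackson_steps lam mu P)\<^sup>*\<^sup>* 0 (unitv i0)"
    using irreducible unfolding hypA_def by blast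
  have additive: "?f (a + b) = ?f a + ?f b" for a b
    by (simp add: plus_vec_def vec_lambda_inverse sum.distrib)
  have "?f 0 \<le> ?f (unitv i0)"
    by (rule rtranclp_steps_additive_mono[of ?f, OF additive nonneg path])
  then show False
    using \<open>i0 \<in> S\<close> by (simp add: sum_unitv)
qed

lemma p0_nonneg: "p0 P k \<ge> 0"
  using P_rows[of k] by (simp add: p0_def)

text \<open>At a negative minimum of \<open>v\<close> superharmonicity keeps all routing mass at the
  minimum and forbids exits, so the set of minimisers would be a closed set without exit.\<close>
lemma minimum_principle:
  fixes v :: "real^'n"
  assumes on_T: "\<And>j. j \<in> T \<Longrightarrow> v$j \<ge> 0"
    and superharmonic: "\<And>j. j \<notin> T \<Longrightarrow> (\<Sum>l\<in>UNIV. P$j$l * v$l) \<le> v$j"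
  shows "v$j \<ge> 0"
proof (rule ccontr)
  assume "\<not> v$j \<ge> 0"
  define m where "m = Min (range (\<lambda>l. v$l))"
  have m_le: "m \<le> v$l" for l
    unfolding m_def by simp
  have "m \<in> range (\<lambda>l. v$l)"
    unfolding m_def by (rule Min_in) auto
  then obtain j0 where j0: "v$j0 = m"
    by auto
  have m_neg: "m < 0"
    using m_le[of j] \<open>\<not> v$j \<ge> 0\<close> by linarith
  have trap: "(\<forall>l. P$k$l > 0 \<longrightarrow> v$l = m) \<and> p0 P k = 0" if vk: "v$k = m" for k
  proof -
    have "k \<notin> T"
      using on_T[of k] vk m_neg by linarith
    have "(\<Sum>l\<in>UNIV. P$k$l * (v$l - m)) + (- m) * p0 P k = (\<Sum>l\<in>UNIV. P$k$l * v$l) - v$k"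
      using vk by (simp add: p0_def right_diff_distrib sum_subtractf sum_distrib_left sum_negf algebra_simps)
    also have "\<dots> \<le> 0"
      using superharmonic[OF \<open>k \<notin> T\<close>] by simp
    finally have le0: "(\<Sum>l\<in>UNIV. P$k$l * (v$l - m)) + (- m) * p0 P k \<le> 0" .
    have terms_nonneg: "\<forall>l\<in>UNIV. P$k$l * (v$l - m) \<ge> 0"
      using P_nonneg m_le by simp
    then have "(\<Sum>l\<in>UNIV. P$k$l * (v$l - m)) \<ge> 0"
      by (simp add: sum_nonneg)
    moreover have "(- m) * p0 P k \<ge> 0"
      using m_neg p0_nonneg[of k] by (simp add: mult_nonpos_nonneg)
    ultimately have "(\<Sum>l\<in>UNIV. P$k$l * (v$l - m)) = 0" and "(- m) * p0 P k = 0"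
      using le0 by linarith+
    with terms_nonneg m_neg show ?thesis
      by (auto simp: sum_nonneg_eq_0_iff) (metis less_irrefl)
  qed
  show False
    by (rule closed_set_has_exit[of j0 "{l. v$l = m}"]) (use j0 trap in auto)
qed

lemma I_minus_P_invertible: "invertible (mat 1 - P)"
proof -
  have "x = 0" if ker: "(mat 1 - P) *v x = 0" for x :: "real^'n"
  proof -
    have fixed: "(\<Sum>l\<in>UNIV. P$j$l * x$l) = x$j" for j
      using arg_cong[OF ker, of "\<lambda>y. y$j"] by (simp add: I_minus_mult_vec_nth)
    have "x$j \<ge> 0" for j
      by (rule minimum_principle[of "{}"]) (simp_all add: fixed)
    moreover have "(- x)$j \<ge> 0" for j
      by (rule minimum_principle[of "{}"]) (simp_all add: fixed sum_negf)
    ultimately show "x = 0"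
      by (simp add: vec_eq_iff order_antisym)
  qed
  then show ?thesis
    unfolding invertible_left_inverse matrix_left_invertible_ker by blast
qed

definition green :: "real^'n^'n" where
  "green = matrix_inv (mat 1 - P)"

lemma green_inverse: "(mat 1 - P) ** green = mat 1 \<and> green ** (mat 1 - P) = mat 1"
  using I_minus_P_invertible unfolding invertible_def matrix_inv_def green_def by (rule someI_ex)

lemma green_eq_left: "green$j$c = (if j = c then 1 else 0) + (\<Sum>l\<in>UNIV. P$j$l * green$l$c)"
  using arg_cong[OF conjunct1[OF green_inverse], of "\<lambda>A. A$j$c"]
  unfolding I_minus_mult_nth by (simp add: mat_def)

lemma green_eq_right: "green$j$c = (if j = c then 1 else 0) + (\<Sum>l\<in>UNIV. green$j$l * P$l$c)"
  using arg_cong[OF conjunct2[OF green_inverse], of "\<lambda>A. A$j$c"]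
  unfolding mult_I_minus_nth by (simp add: mat_def)

lemma green_nonneg: "green$j$c \<ge> 0"
proof -
  have "(\<chi> j. green$j$c)$j \<ge> 0"
    by (rule minimum_principle[of "{}"]) (simp, subst (2) green_eq_left, simp)
  then show ?thesis by simp
qed

lemma green_diag_ge_one: "green$b$b \<ge> 1"
  using green_eq_left[of b b] P_nonneg green_nonneg
  by (simp add: sum_nonneg)

lemma green_le_diag: "green$j$b \<le> green$b$b"
proof -
  let ?v = "\<chi> j. green$b$b - green$j$b"
  have "?v$j \<ge> 0"
  proof (rule minimum_principle[of "{b}"])
    fix j assume "j \<notin> {b}"
    have "(\<Sum>l\<in>UNIV. P$j$l * ?v$l) = green$b$b * (1 - p0 P j) - (\<Sum>l\<in>UNIV. P$j$l * green$l$b)"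
      by (simp add: p0_def right_diff_distrib sum_subtractf sum_distrib_left mult.commute)
    also have "\<dots> = ?v$j - green$b$b * p0 P j"
      using green_eq_left[of j b] \<open>j \<notin> {b}\<close> by (simp add: algebra_simps)
    also have "\<dots> \<le> ?v$j"
      using green_diag_ge_one[of b] p0_nonneg[of j] by simp
    finally show "(\<Sum>l\<in>UNIV. P$j$l * ?v$l) \<le> ?v$j" .
  qed simp
  then show ?thesis by simp
qed

lemma green_minor_eq:
  assumes "j \<noteq> b"
  shows "green$j$c * green$b$b - green$j$b * green$b$c
    = (if j = c then green$b$b else 0)
      + (\<Sum>l\<in>UNIV. P$j$l * (green$l$c * green$b$b - green$l$b * green$b$c))"
proof -
  have "(\<Sum>l\<in>UNIV. P$j$l * (green$l$c * green$b$b - green$l$b * green$b$c))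
      = green$b$b * (\<Sum>l\<in>UNIV. P$j$l * green$l$c) - green$b$c * (\<Sum>l\<in>UNIV. P$j$l * green$l$b)"
    by (simp add: right_diff_distrib sum_subtractf sum_distrib_left algebra_simps)
  then show ?thesis
    using green_eq_left[of j c] green_eq_left[of j b] assms by (simp add: algebra_simps)
qed

lemma green_minor_nonneg: "green$j$b * green$b$c \<le> green$j$c * green$b$b"
proof -
  let ?v = "\<chi> j. green$j$c * green$b$b - green$j$b * green$b$c"
  have "?v$j \<ge> 0"
  proof (rule minimum_principle[of "{b}"])
    fix j assume "j \<notin> {b}"
    then show "(\<Sum>l\<in>UNIV. P$j$l * ?v$l) \<le> ?v$j"
      using green_minor_eq[of j b c] green_diag_ge_one[of b] by simp
  qed simp
  then show ?thesis by simp
qed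

lemma green_minor_pos:
  assumes "c \<noteq> b"
  shows "green$c$b * green$b$c < green$c$c * green$b$b"
proof -
  have "(\<Sum>l\<in>UNIV. P$c$l * (green$l$c * green$b$b - green$l$b * green$b$c)) \<ge> 0"
    using P_nonneg green_minor_nonneg by (simp add: sum_nonneg)
  then show ?thesis
    using green_minor_eq[OF assms, of c] green_diag_ge_one[of b] by simp
qed

end

locale jackson_network = jackson_routing +
  fixes nu :: "real^'a"
  assumes lam_nonneg: "\<And>i. lam$i \<ge> 0"
    and traffic: "\<And>j. nu$j = lam$j + (\<Sum>i\<in>UNIV. nu$i * P$i$j)"
begin

lemma nu_eq_lam_green: "nu$c = (\<Sum>j\<in>UNIV. lam$j * green$j$c)"
proof -
  have "lam = nu v* (mat 1 - P)"
  proof (rule vec_eq_iff[THEN iffD2], intro allI)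
    fix j
    have "(nu v* (mat 1 - P))$j = nu$j - (\<Sum>i\<in>UNIV. nu$i * P$i$j)"
      unfolding vector_matrix_mult_diff_rdistrib vector_matrix_mul_rid
      by (simp add: vector_matrix_mult_def mult.commute)
    then show "lam$j = (nu v* (mat 1 - P))$j"
      using traffic[of j] by simp
  qed
  then have "lam v* green = nu"
    using green_inverse by (simp add: vector_matrix_mul_assoc)
  then show ?thesis
    by (auto simp: vector_matrix_mult_def vec_eq_iff mult.commute)
qed

lemma nu_nonneg: "nu$c \<ge> 0"
  unfolding nu_eq_lam_green using lam_nonneg green_nonneg by (simp add: sum_nonneg)

lemma nu_pos: "nu$c > 0"
proof (rule ccontr)
  assume "\<not> nu$c > 0"
  then have "nu$c = 0"
    using nu_nonneg[of c] by simp
  define S where "S = {l. nu$l = 0}"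
  have no_feed: "lam$l = 0 \<and> (\<forall>j. nu$j * P$j$l = 0)" if "l \<in> S" for l
  proof -
    have terms_nonneg: "\<forall>j\<in>UNIV. nu$j * P$j$l \<ge> 0"
      using nu_nonneg P_nonneg by simp
    moreover have "lam$l + (\<Sum>j\<in>UNIV. nu$j * P$j$l) = 0"
      using traffic[of l] that by (simp add: S_def)
    ultimately show ?thesis
      using lam_nonneg[of l] sum_nonneg[of UNIV "\<lambda>j. nu$j * P$j$l"]
      by (simp add: add_nonneg_eq_0_iff sum_nonneg_eq_0_iff)
  qed
  show False
  proof (rule set_has_entrance[of c S])
    fix j l assume "j \<notin> S" "l \<in> S"
    then show "P$j$l = 0"
      using no_feed by (auto simp: S_def)
  qed (use \<open>nu$c = 0\<close> no_feed in \<open>auto simp: S_def\<close>)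
qed

lemma nu_green_le: "nu$b * green$b$c \<le> nu$c * green$b$b"
proof -
  have "nu$b * green$b$c = (\<Sum>j\<in>UNIV. lam$j * (green$j$b * green$b$c))"
    unfolding nu_eq_lam_green by (simp add: sum_distrib_right mult.assoc)
  also have "\<dots> \<le> (\<Sum>j\<in>UNIV. lam$j * (green$j$c * green$b$b))"
    by (intro sum_mono mult_left_mono green_minor_nonneg lam_nonneg)
  also have "\<dots> = nu$c * green$b$b"
    unfolding nu_eq_lam_green by (simp add: sum_distrib_right mult.assoc)
  finally show ?thesis .
qed

end

section \<open>The function \<open>Rfun\<close>\<close>

definition slack :: "real^'n^'n \<Rightarrow> real^'n \<Rightarrow> 'n::finite \<Rightarrow> real" where
  "slack P \<alpha> k = (\<Sum>j\<in>UNIV. P$k$j * exp (\<alpha>$j)) + p0 P k - exp (\<alpha>$k)"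

lemma Bset_iff_slack: "\<alpha> \<in> Bset P k1 \<longleftrightarrow> (\<forall>k. k \<noteq> k1 \<longrightarrow> slack P \<alpha> k \<ge> 0)"
  by (simp add: Bset_def slack_def)

lemma Jset_iff_slack: "k \<in> Jset P \<alpha> \<longleftrightarrow> slack P \<alpha> k = 0"
  by (auto simp: Jset_def slack_def)

lemma slack_zero: "slack P 0 k = 0"
  by (simp add: slack_def p0_def)

lemma Rfun_eq_slack:
  "Rfun lam m P \<alpha> = (\<Sum>k\<in>UNIV. m$k * slack P \<alpha> k / exp (\<alpha>$k)) + (\<Sum>k\<in>UNIV. lam$k * (exp (\<alpha>$k) - 1))"
proof -
  have "(\<Sum>j\<in>UNIV. P$k$j * exp (\<alpha>$j - \<alpha>$k)) = (\<Sum>j\<in>UNIV. P$k$j * exp (\<alpha>$j)) / exp (\<alpha>$k)"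
    for k by (simp add: exp_diff sum_divide_distrib)
  then have "(\<Sum>j\<in>UNIV. P$k$j * exp (\<alpha>$j - \<alpha>$k)) + p0 P k * exp (- \<alpha>$k) - 1
      = slack P \<alpha> k / exp (\<alpha>$k)" for k
    by (simp add: slack_def exp_minus field_simps)
  then show ?thesis
    unfolding Rfun_def by simp
qed

lemma Rfun_rates_diff:
  "Rfun lam m P \<alpha> - Rfun lam m' P \<alpha> = (\<Sum>k\<in>UNIV. (m$k - m'$k) * slack P \<alpha> k / exp (\<alpha>$k))"
  unfolding Rfun_eq_slack by (simp add: sum_subtractf[symmetric] left_diff_distrib diff_divide_distrib)

text \<open>The partial derivative of \<open>Rfun lam m P\<close> with respect to \<open>\<alpha>$q\<close>, evaluated at \<open>\<beta>\<close>.\<close>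
definition Rfun_grad :: "real^'n \<Rightarrow> real^'n \<Rightarrow> real^'n^'n \<Rightarrow> real^'n \<Rightarrow> 'n::finite \<Rightarrow> real" where
  "Rfun_grad lam m P \<beta> q =
     (\<Sum>k\<in>UNIV. m$k * P$k$q * exp (\<beta>$q - \<beta>$k)) - (\<Sum>j\<in>UNIV. m$q * P$q$j * exp (\<beta>$j - \<beta>$q))
     - m$q * p0 P q * exp (- \<beta>$q) + lam$q * exp (\<beta>$q)"

lemma Rfun_grad_scaled_rates:
  assumes "\<And>k. m$k = w k * exp (\<beta>$k)"
  shows "Rfun_grad lam m P \<beta> q
    = exp (\<beta>$q) * (lam$q + (\<Sum>k\<in>UNIV. w k * P$k$q) - w q) - w q * slack P \<beta> q"
  by (simp add: Rfun_grad_def slack_def assms exp_diff exp_minus sum_distrib_left sum_distrib_right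
      field_simps)

lemma weighted_exp_tangent:
  assumes "a \<ge> 0"
  shows "a * exp v * (u - v) \<le> a * (exp u - exp (v::real))"
proof -
  have "exp v * (1 + (u - v)) \<le> exp v * exp (u - v)"
    using exp_ge_add_one_self[of "u - v"] by simp
  then have "exp v * (u - v) \<le> exp u - exp v"
    by (simp add: exp_diff algebra_simps)
  then show ?thesis
    using mult_left_mono[OF _ assms] by (simp add: mult.assoc)
qed

lemma sum_flow_balance:
  fixes c :: "'n \<Rightarrow> 'n \<Rightarrow> real"
  shows "(\<Sum>k\<in>UNIV. \<Sum>j\<in>UNIV. c k j * (d j - d k))
    = (\<Sum>q\<in>UNIV. d q * ((\<Sum>k\<in>UNIV. c k q) - (\<Sum>j\<in>UNIV. c q j)))"
proof -
  have "(\<Sum>k\<in>UNIV. \<Sum>j\<in>UNIV. c k j * d j) = (\<Sum>q\<in>UNIV. d q * (\<Sum>k\<in>UNIV. c k q))"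
    by (subst sum.swap) (simp add: sum_distrib_left mult.commute)
  then show ?thesis
    by (simp add: right_diff_distrib sum_subtractf sum_distrib_left mult.commute)
qed

text \<open>Convexity: every exponential term lies above its tangent line.\<close>
lemma Rfun_ge_tangent:
  assumes m: "\<And>k. m$k \<ge> 0" and lam: "\<And>k. lam$k \<ge> 0"
    and P: "\<And>k j. P$k$j \<ge> 0" and p0: "\<And>k. p0 P k \<ge> 0"
  shows "Rfun lam m P \<beta> + (\<Sum>q\<in>UNIV. Rfun_grad lam m P \<beta> q * (\<alpha>$q - \<beta>$q)) \<le> Rfun lam m P \<alpha>"
proof -
  define d where "d k = \<alpha>$k - \<beta>$k" for k
  define c where "c k j = m$k * P$k$j * exp (\<beta>$j - \<beta>$k)" for k j
  have "(\<Sum>q\<in>UNIV. Rfun_grad lam m P \<beta> q * (\<alpha>$q - \<beta>$q))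
      = (\<Sum>k\<in>UNIV. \<Sum>j\<in>UNIV. c k j * (d j - d k))
        + (\<Sum>k\<in>UNIV. m$k * p0 P k * (exp (- \<beta>$k) * (- d k)))
        + (\<Sum>k\<in>UNIV. lam$k * (exp (\<beta>$k) * d k))"
    unfolding sum_flow_balance Rfun_grad_def c_def d_def
    by (simp add: sum.distrib[symmetric] algebra_simps)
  also have "\<dots> \<le> (\<Sum>k\<in>UNIV. \<Sum>j\<in>UNIV. m$k * P$k$j * (exp (\<alpha>$j - \<alpha>$k) - exp (\<beta>$j - \<beta>$k)))
        + (\<Sum>k\<in>UNIV. m$k * p0 P k * (exp (- \<alpha>$k) - exp (- \<beta>$k)))
        + (\<Sum>k\<in>UNIV. lam$k * (exp (\<alpha>$k) - exp (\<beta>$k)))"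
  proof (intro add_mono sum_mono)
    fix k j
    show "c k j * (d j - d k) \<le> m$k * P$k$j * (exp (\<alpha>$j - \<alpha>$k) - exp (\<beta>$j - \<beta>$k))"
      using weighted_exp_tangent[of "m$k * P$k$j" "\<beta>$j - \<beta>$k" "\<alpha>$j - \<alpha>$k"] m P
      unfolding c_def d_def by (simp add: algebra_simps)
  next
    fix k
    show "m$k * p0 P k * (exp (- \<beta>$k) * (- d k)) \<le> m$k * p0 P k * (exp (- \<alpha>$k) - exp (- \<beta>$k))"
      using weighted_exp_tangent[of "m$k * p0 P k" "- \<beta>$k" "- \<alpha>$k"] m p0
      unfolding d_def by (simp add: algebra_simps)
    show "lam$k * (exp (\<beta>$k) * d k) \<le> lam$k * (exp (\<alpha>$k) - exp (\<beta>$k))"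
      using weighted_exp_tangent[of "lam$k" "\<beta>$k" "\<alpha>$k"] lam
      unfolding d_def by (simp add: algebra_simps)
  qed
  also have "\<dots> = Rfun lam m P \<alpha> - Rfun lam m P \<beta>"
    unfolding Rfun_def
    by (simp add: sum_subtractf sum.distrib right_diff_distrib distrib_left sum_distrib_left mult.assoc)
  finally show ?thesis
    by simp
qed

lemma Rfun_descent:
  assumes m: "\<And>k. m$k \<ge> 0" and lam: "\<And>k. lam$k \<ge> 0"
    and P: "\<And>k j. P$k$j \<ge> 0" and p0: "\<And>k. p0 P k \<ge> 0"
    and stationary: "\<And>q. Rfun_grad lam m P \<beta> q = 0"
    and slack_\<alpha>: "\<And>k. (mu$k - m$k) * slack P \<alpha> k \<ge> 0"
    and strict: "(mu$i - m$i) * slack P \<alpha> i > 0"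
    and slack_\<beta>: "\<And>k. (mu$k - m$k) * slack P \<beta> k = 0"
  shows "Rfun lam mu P \<beta> < Rfun lam mu P \<alpha>"
proof -
  have "Rfun lam mu P \<beta> = Rfun lam m P \<beta>"
    using Rfun_rates_diff[of lam mu P \<beta> m] slack_\<beta> by simp
  also have "\<dots> \<le> Rfun lam m P \<alpha>"
    using Rfun_ge_tangent[OF m lam P p0, of \<beta> \<alpha>] stationary by simp
  also have "\<dots> < Rfun lam mu P \<alpha>"
  proof -
    have "(mu$i - m$i) * slack P \<alpha> i / exp (\<alpha>$i)
        \<le> (\<Sum>k\<in>UNIV. (mu$k - m$k) * slack P \<alpha> k / exp (\<alpha>$k))"
      by (rule member_le_sum) (use slack_\<alpha> in auto)
    moreover have "(mu$i - m$i) * slack P \<alpha> i / exp (\<alpha>$i) > 0"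
      using strict by simp
    ultimately show ?thesis
      using Rfun_rates_diff[of lam mu P \<alpha> m] by linarith
  qed
  finally show ?thesis .
qed

section \<open>The adapted point\<close>

lemma adapted_rate_less:
  fixes A B F H a b s t :: real
  assumes A: "A > 0" and B: "B > 0" and F: "0 \<le> F" "F \<le> B" and H: "0 \<le> H" "H \<le> A"
    and FH: "F * H < A * B" and pos: "s > 0" "t > 0" "a > 0" "b > 0"
    and ab: "a\<^sup>2 * B \<le> b\<^sup>2 * A" and sF: "s\<^sup>2 * F \<le> t\<^sup>2 * A" and tH: "t\<^sup>2 * H \<le> s\<^sup>2 * B"
  shows "(t\<^sup>2 + s * a * F / A) * (1 + a * H / (s * A)) < (t + b)\<^sup>2"
proof -
  have "(a * t * H)\<^sup>2 \<le> (b * s * A)\<^sup>2"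
  proof -
    have "(a * t * H)\<^sup>2 = (t\<^sup>2 * H) * (a\<^sup>2 * H)"
      by (simp add: power2_eq_square)
    also have "\<dots> \<le> (s\<^sup>2 * B) * (a\<^sup>2 * H)"
      using tH H by (simp add: mult_right_mono)
    also have "\<dots> = s\<^sup>2 * (a\<^sup>2 * B) * H"
      by simp
    also have "\<dots> \<le> s\<^sup>2 * (b\<^sup>2 * A) * H"
      using ab H by (intro mult_right_mono mult_left_mono) auto
    also have "\<dots> \<le> s\<^sup>2 * (b\<^sup>2 * A) * A"
      using H A by (intro mult_left_mono) auto
    also have "\<dots> = (b * s * A)\<^sup>2"
      by (simp add: power2_eq_square)
    finally show ?thesis .
  qed
  then have "a * t * H \<le> b * s * A"
    by (rule power2_le_imp_le) (use pos A in simp)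
  then have term1: "a * t\<^sup>2 * H / (s * A) \<le> b * t"
    using pos A by (simp add: field_simps power2_eq_square mult_right_mono)
  have "(s * a * F)\<^sup>2 \<le> (b * t * A)\<^sup>2"
  proof -
    have "a\<^sup>2 * F \<le> b\<^sup>2 * A"
      using ab mult_left_mono[OF F(2), of "a\<^sup>2"] by simp
    then have "(s\<^sup>2 * F) * (a\<^sup>2 * F) \<le> (t\<^sup>2 * A) * (b\<^sup>2 * A)"
      by (rule mult_mono[OF sF]) (use F A in auto)
    then show ?thesis
      by (simp add: power2_eq_square algebra_simps)
  qed
  then have "s * a * F \<le> b * t * A"
    by (rule power2_le_imp_le) (use pos A in simp)
  then have term2: "s * a * F / A \<le> b * t"
    using A by (simp add: field_simps)
  have "a\<^sup>2 * (F * H) * B \<le> b\<^sup>2 * A * (F * H)"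
    using mult_right_mono[OF ab, of "F * H"] F H by (simp add: algebra_simps)
  also have "\<dots> < b\<^sup>2 * A * (A * B)"
    using FH pos A by simp
  finally have term3: "a\<^sup>2 * F * H / A\<^sup>2 < b\<^sup>2"
    using A B by (simp add: field_simps power2_eq_square)
  have "(t\<^sup>2 + s * a * F / A) * (1 + a * H / (s * A))
      = t\<^sup>2 + a * t\<^sup>2 * H / (s * A) + s * a * F / A + a\<^sup>2 * F * H / A\<^sup>2"
    using pos A by (simp add: field_simps power2_eq_square)
  moreover have "(t + b)\<^sup>2 = t\<^sup>2 + 2 * (b * t) + b\<^sup>2"
    by (simp add: power2_sum)
  ultimately show ?thesis
    using term1 term2 term3 by linarith
qed

context jackson_network
begin

definition adapted_point :: "'a \<Rightarrow> real \<Rightarrow> real^'a" where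
  "adapted_point k1 c = (\<chi> k. ln (1 + c * green$k$k1))"

definition adapted_rates :: "'a \<Rightarrow> real \<Rightarrow> real^'a" where
  "adapted_rates k1 c = (\<chi> k. (nu$k + c * nu$k1 * green$k1$k) * (1 + c * green$k$k1))"

lemma exp_adapted_point:
  assumes "c \<ge> 0"
  shows "exp (adapted_point k1 c $ k) = 1 + c * green$k$k1"
proof -
  have "1 + c * green$k$k1 > 0"
    using assms green_nonneg[of k k1] by (simp add: add_pos_nonneg)
  then show ?thesis
    by (simp add: adapted_point_def)
qed

lemma slack_adapted_point:
  assumes "c \<ge> 0"
  shows "slack P (adapted_point k1 c) k = - (if k = k1 then c else 0)"
proof -
  have "slack P (adapted_point k1 c) k
      = ((\<Sum>j\<in>UNIV. P$k$j) + p0 P k - 1) + c * ((\<Sum>j\<in>UNIV. P$k$j * green$j$k1) - green$k$k1)"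
    by (simp add: slack_def exp_adapted_point[OF assms] distrib_left sum.distrib sum_distrib_left
        algebra_simps)
  then show ?thesis
    using green_eq_left[of k k1] by (simp add: p0_def)
qed

lemma Rfun_grad_adapted:
  assumes "c \<ge> 0"
  shows "Rfun_grad lam (adapted_rates k1 c) P (adapted_point k1 c) q = 0"
proof -
  define w where "w k = nu$k + c * nu$k1 * green$k1$k" for k
  have "(\<Sum>k\<in>UNIV. w k * P$k$q) = nu$q - lam$q + c * nu$k1 * (green$k1$q - (if k1 = q then 1 else 0))"
    using traffic[of q] green_eq_right[of k1 q]
    by (simp add: w_def distrib_right sum.distrib sum_distrib_left algebra_simps)
  moreover have w_k1: "w k1 = nu$k1 * (1 + c * green$k1$k1)"
    by (simp add: w_def algebra_simps)
  ultimately have "lam$q + (\<Sum>k\<in>UNIV. w k * P$k$q) - w q = - (if q = k1 then c * nu$k1 else 0)"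
    by (auto simp: w_def algebra_simps)
  moreover have "adapted_rates k1 c $ k = w k * exp (adapted_point k1 c $ k)" for k
    by (simp add: adapted_rates_def w_def exp_adapted_point[OF assms])
  ultimately show ?thesis
    by (simp add: Rfun_grad_scaled_rates[where w = w] slack_adapted_point[OF assms]
        exp_adapted_point[OF assms] w_k1)
qed

lemma adapted_rates_at: "adapted_rates k1 c $ k1 = nu$k1 * (1 + c * green$k1$k1)\<^sup>2"
  by (simp add: adapted_rates_def power2_eq_square algebra_simps)

lemma adapted_rates_nonneg: "c \<ge> 0 \<Longrightarrow> adapted_rates k1 c $ k \<ge> 0"
  using nu_nonneg green_nonneg by (simp add: adapted_rates_def)

definition tuned_tilt :: "'a \<Rightarrow> real" where
  "tuned_tilt k1 = (sqrt (mu$k1) - sqrt (nu$k1)) / (sqrt (nu$k1) * green$k1$k1)"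

lemma tuned_tilt_pos: "nu$k1 < mu$k1 \<Longrightarrow> tuned_tilt k1 > 0"
  using nu_pos[of k1] green_diag_ge_one[of k1] by (simp add: tuned_tilt_def)

lemma adapted_rates_tuned_at:
  assumes "nu$k1 < mu$k1"
  shows "adapted_rates k1 (tuned_tilt k1) $ k1 = mu$k1"
proof -
  define s where "s = sqrt (nu$k1)"
  have s: "s > 0"
    using nu_pos[of k1] by (simp add: s_def)
  have "1 + tuned_tilt k1 * green$k1$k1 = sqrt (mu$k1) / s"
    using s green_diag_ge_one[of k1] by (simp add: tuned_tilt_def s_def[symmetric] field_simps)
  then have "adapted_rates k1 (tuned_tilt k1) $ k1 = s\<^sup>2 * (sqrt (mu$k1) / s)\<^sup>2"
    unfolding adapted_rates_at using nu_nonneg[of k1] by (simp add: s_def)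
  also have "\<dots> = mu$k1"
    using s mu_pos[of k1] by (simp add: power_divide)
  finally show ?thesis .
qed

lemma adapted_rates_tuned_less:
  assumes "k \<noteq> k1" and below: "nu$k1 < mu$k1" "nu$k < mu$k"
    and min1: "(sqrt (mu$k1) - sqrt (nu$k1))\<^sup>2 / green$k1$k1 \<le> (sqrt (mu$k) - sqrt (nu$k))\<^sup>2 / green$k$k"
  shows "adapted_rates k1 (tuned_tilt k1) $ k < mu$k"
proof -
  define A where "A = green$k1$k1"
  define s where "s = sqrt (nu$k1)"
  define a where "a = sqrt (mu$k1) - s"
  define t where "t = sqrt (nu$k)"
  define b where "b = sqrt (mu$k) - t"
  have A: "A \<ge> 1"
    unfolding A_def by (rule green_diag_ge_one)
  have tilt: "tuned_tilt k1 = a / (s * A)"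
    by (simp add: tuned_tilt_def a_def s_def A_def)
  have "(t\<^sup>2 + s * a * green$k1$k / A) * (1 + a * green$k$k1 / (s * A)) < (t + b)\<^sup>2"
  proof (rule adapted_rate_less)
    show "A > 0" "green$k$k > 0"
      using A green_diag_ge_one[of k] by simp_all
    show "0 \<le> green$k1$k" "0 \<le> green$k$k1"
      by (rule green_nonneg)+
    show "green$k1$k \<le> green$k$k" "green$k$k1 \<le> A"
      unfolding A_def by (rule green_le_diag)+
    show "green$k1$k * green$k$k1 < A * green$k$k"
      using green_minor_pos[OF \<open>k \<noteq> k1\<close>] by (simp add: A_def mult.commute)
    show "s > 0" "t > 0" "a > 0" "b > 0"
      using nu_pos[of k1] nu_pos[of k] below by (simp_all add: s_def t_def a_def b_def)
    show "a\<^sup>2 * green$k$k \<le> b\<^sup>2 * A"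
      using min1 A green_diag_ge_one[of k]
      by (simp add: a_def b_def s_def t_def A_def[symmetric] field_simps)
    show "s\<^sup>2 * green$k1$k \<le> t\<^sup>2 * A" "t\<^sup>2 * green$k$k1 \<le> s\<^sup>2 * green$k$k"
      using nu_green_le[of k1 k] nu_green_le[of k k1] nu_nonneg[of k] nu_nonneg[of k1]
      by (simp_all add: s_def t_def A_def)
  qed
  moreover have "adapted_rates k1 (tuned_tilt k1) $ k
      = (t\<^sup>2 + s * a * green$k1$k / A) * (1 + a * green$k$k1 / (s * A))"
    using nu_pos[of k1] A nu_nonneg[of k]
    by (simp add: adapted_rates_def tilt t_def s_def power2_eq_square field_simps)
  moreover have "(t + b)\<^sup>2 = mu$k"
    using mu_pos[of k] by (simp add: b_def)
  ultimately show ?thesis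
    by simp
qed

lemma Rfun_grad_traffic: "Rfun_grad lam nu P 0 q = 0"
  using traffic[of q] by (simp add: Rfun_grad_scaled_rates[where w = "\<lambda>k. nu$k"] slack_zero)

lemma descent_step:
  assumes below: "\<And>k. nu$k < mu$k"
    and min1: "\<And>k. (sqrt (mu$k1) - sqrt (nu$k1))\<^sup>2 / green$k1$k1
                    \<le> (sqrt (mu$k) - sqrt (nu$k))\<^sup>2 / green$k$k"
    and \<alpha>: "\<alpha> \<in> Bset P k1" and i: "i \<noteq> k1" "i \<notin> Jset P \<alpha>"
  obtains \<beta> where "\<beta> \<in> Bset P k1" "Jset P \<alpha> \<union> {i} \<subseteq> Jset P \<beta>"
    "Rfun lam mu P \<beta> < Rfun lam mu P \<alpha>"
proof -
  have slack_\<alpha>: "slack P \<alpha> k \<ge> 0" if "k \<noteq> k1" for k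
    using \<alpha> that by (simp add: Bset_iff_slack)
  have slack_i: "slack P \<alpha> i > 0"
    using slack_\<alpha>[OF i(1)] i(2) by (simp add: Jset_iff_slack)
  have descent: "Rfun lam mu P \<beta> < Rfun lam mu P \<alpha>"
    if "\<And>k. m$k \<ge> 0" "\<And>q. Rfun_grad lam m P \<beta> q = 0"
      "\<And>k. (mu$k - m$k) * slack P \<alpha> k \<ge> 0" "m$i < mu$i"
      "\<And>k. (mu$k - m$k) * slack P \<beta> k = 0" for m \<beta>
    by (rule Rfun_descent[where i = i, OF that(1) lam_nonneg P_nonneg p0_nonneg that(2,3) _ that(5)])
      (use that(4) slack_i in simp)
  show ?thesis
  proof (cases "k1 \<in> Jset P \<alpha>")
    case True
    show ?thesis
    proof (rule that[of 0])
      show "0 \<in> Bset P k1" "Jset P \<alpha> \<union> {i} \<subseteq> Jset P 0"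
        by (auto simp: Bset_iff_slack Jset_iff_slack slack_zero)
      have "(mu$k - nu$k) * slack P \<alpha> k \<ge> 0" for k
        using True slack_\<alpha>[of k] below[of k] by (cases "k = k1") (auto simp: Jset_iff_slack)
      then show "Rfun lam mu P 0 < Rfun lam mu P \<alpha>"
        by (intro descent[of nu]) (simp_all add: nu_nonneg Rfun_grad_traffic below slack_zero)
    qed
  next
    case False
    define c where "c = tuned_tilt k1"
    have c: "c \<ge> 0" "adapted_rates k1 c $ k1 = mu$k1"
      "\<And>k. k \<noteq> k1 \<Longrightarrow> adapted_rates k1 c $ k < mu$k"
      using tuned_tilt_pos[OF below] adapted_rates_tuned_at[OF below]
        adapted_rates_tuned_less[OF _ below below min1] by (simp_all add: c_def less_imp_le)
    show ?thesis
    proof (rule that[of "adapted_point k1 c"])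
      show "adapted_point k1 c \<in> Bset P k1"
        by (simp add: Bset_iff_slack slack_adapted_point[OF c(1)])
      show "Jset P \<alpha> \<union> {i} \<subseteq> Jset P (adapted_point k1 c)"
        using False i(1) by (auto simp: Jset_iff_slack slack_adapted_point[OF c(1)])
      have "(mu$k - adapted_rates k1 c $ k) * slack P \<alpha> k \<ge> 0" for k
        using c slack_\<alpha>[of k] by (cases "k = k1") (auto simp: less_imp_le)
      then show "Rfun lam mu P (adapted_point k1 c) < Rfun lam mu P \<alpha>"
        by (intro descent[of "adapted_rates k1 c"])
          (simp_all add: adapted_rates_nonneg Rfun_grad_adapted slack_adapted_point c i(1))
    qed
  qed
qed

end

theorem lemma8p1:
  fixes lam mu nu :: "real^'n::finite" and P :: "real^'n^'n" and k1 :: 'n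
    and \<alpha> :: "real^'n"
  assumes lam_nonneg: "\<forall>i. lam$i \<ge> 0"
    and mu_pos: "\<forall>i. mu$i > 0"
    and P_nonneg: "\<forall>i j. P$i$j \<ge> 0"
    and P_diag: "\<forall>i. P$i$i = 0"
    and P_rows: "\<forall>i. (\<Sum>j\<in>UNIV. P$i$j) \<le> 1"
    and A: "hypA lam mu P"
    and traffic: "\<forall>j. nu$j = lam$j + (\<Sum>i\<in>UNIV. nu$i * P$i$j)"
    and B: "\<forall>i. nu$i < mu$i"
    and G_def: "G = matrix_inv (mat 1 - P)"
    and min1: "\<forall>i. (sqrt (mu$k1) - sqrt (nu$k1))\<^sup>2 / G$k1$k1
                     \<le> (sqrt (mu$i) - sqrt (nu$i))\<^sup>2 / G$i$i"
    and alpha_B: "\<alpha> \<in> Bset P k1"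
    and nonempty: "(UNIV - {k1}) - Jset P \<alpha> \<noteq> {}"
  shows "\<forall>i \<in> (UNIV - {k1}) - Jset P \<alpha>. \<exists>\<alpha>' \<in> Bset P k1.
            Jset P \<alpha> \<union> {i} \<subseteq> Jset P \<alpha>' \<and>
            Rfun lam mu P \<alpha>' < max (Rfun lam mu P \<alpha>)
                                   (- (1 / G$i$i) * (sqrt (mu$i) - sqrt (nu$i))\<^sup>2)"
proof
  fix i assume i: "i \<in> (UNIV - {k1}) - Jset P \<alpha>"
  interpret jackson_network lam mu P nu
    by (unfold_locales; use lam_nonneg mu_pos P_nonneg P_rows A traffic in blast)
  have "G = green"
    by (simp add: G_def green_def)
  with i obtain \<beta> where "\<beta> \<in> Bset P k1" "Jset P \<alpha> \<union> {i} \<subseteq> Jset P \<beta>"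
      "Rfun lam mu P \<beta> < Rfun lam mu P \<alpha>"
    using descent_step[of k1 \<alpha> i, OF _ _ alpha_B] B min1 by blast
  then show "\<exists>\<alpha>' \<in> Bset P k1. Jset P \<alpha> \<union> {i} \<subseteq> Jset P \<alpha>' \<and>
      Rfun lam mu P \<alpha>' < max (Rfun lam mu P \<alpha>) (- (1 / G$i$i) * (sqrt (mu$i) - sqrt (nu$i))\<^sup>2)"
    by (intro bexI[of _ \<beta>]) auto
qed

end
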